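(* Let $q$ be a prime power and $M,N$ positive integers. Suppose there exists a set of $k_1$ $3$-independent vectors in $(\mathbb{F}_q)^M$ and a set of $k_2$ $3$-independent vectors in $(\mathbb{F}_q)^N$. Then there exists a $3$--orthogonal $(k_1k_2)$--$\mathrm{MOFR}(q^M,q^N;q)$.
   Context: A set of vectors over a field is $t$-independent if each of its subsets of size $t$ is linearly independent. A frequency rectangle of type $\mathrm{FR}(m,n;q)$ is an $m\times n$ array on a symbol set of size $q$ in which each symbol appears exactly $n/q$ times in each row and $m/q$ times in each column. Two frequency rectangles of the same type are orthogonal if upon superimposition each ordered pair of symbols appears the same number of times; a $k$--$\mathrm{MOFR}(m,n;q)$ is a set of $k$ pairwise orthogonal frequency rectangles of type $\mathrm{FR}(m,n;q)$. Such a set is $t$--orthogonal if upon superimposing any $t$ of its members, each of the $q^t$ ordered $t$-tuples of symbols occurs exactly $mn/q^t$ times. *)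

theory Defs
  imports "HOL-Library.Cardinality"
begin

definition vecs :: "nat \<Rightarrow> (nat \<Rightarrow> 'a::zero) set" where
  "vecs M = {v. \<forall>i\<ge>M. v i = 0}"

definition lin_indep_vecs :: "nat \<Rightarrow> (nat \<Rightarrow> 'a::field) set \<Rightarrow> bool" where
  "lin_indep_vecs M T \<longleftrightarrow>
     (\<forall>c :: (nat \<Rightarrow> 'a) \<Rightarrow> 'a. (\<forall>i<M. (\<Sum>v\<in>T. c v * v i) = 0) \<longrightarrow> (\<forall>v\<in>T. c v = 0))"

definition t_independent :: "nat \<Rightarrow> nat \<Rightarrow> (nat \<Rightarrow> 'a::field) set \<Rightarrow> bool" where
  "t_independent t M S \<longleftrightarrow>
     S \<subseteq> vecs M \<and> (\<forall>T\<subseteq>S. card T \<le> t \<longrightarrow> lin_indep_vecs M T)"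

text \<open>Frequency rectangle FR(m,n;q) on the symbol set UNIV :: 'a set, q = CARD('a);
  rows indexed by {0..<m}, columns by {0..<n}.\<close>
definition freq_rect :: "nat \<Rightarrow> nat \<Rightarrow> (nat \<Rightarrow> nat \<Rightarrow> 'a::finite) \<Rightarrow> bool" where
  "freq_rect m n F \<longleftrightarrow>
     CARD('a) dvd m \<and> CARD('a) dvd n \<and>
     (\<forall>i<m. \<forall>s. card {j. j < n \<and> F i j = s} = n div CARD('a)) \<and>
     (\<forall>j<n. \<forall>s. card {i. i < m \<and> F i j = s} = m div CARD('a))"

definition orthogonal_fr :: "nat \<Rightarrow> nat \<Rightarrow> (nat \<Rightarrow> nat \<Rightarrow> 'a::finite) \<Rightarrow> (nat \<Rightarrow> nat \<Rightarrow> 'a) \<Rightarrow> bool" where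
  "orthogonal_fr m n F G \<longleftrightarrow>
     (\<forall>s t. card {(i, j). i < m \<and> j < n \<and> F i j = s \<and> G i j = t} = m * n div CARD('a) ^ 2)"

definition MOFR :: "nat \<Rightarrow> nat \<Rightarrow> nat \<Rightarrow> (nat \<Rightarrow> nat \<Rightarrow> nat \<Rightarrow> 'a::finite) \<Rightarrow> bool" where
  "MOFR k m n L \<longleftrightarrow>
     (\<forall>a<k. freq_rect m n (L a)) \<and>
     (\<forall>a<k. \<forall>b<k. a \<noteq> b \<longrightarrow> orthogonal_fr m n (L a) (L b))"

definition t_orthogonal :: "nat \<Rightarrow> nat \<Rightarrow> nat \<Rightarrow> nat \<Rightarrow> (nat \<Rightarrow> nat \<Rightarrow> nat \<Rightarrow> 'a::finite) \<Rightarrow> bool" where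
  "t_orthogonal t k m n L \<longleftrightarrow>
     (\<forall>idx. inj_on idx {0..<t} \<longrightarrow> idx ` {0..<t} \<subseteq> {0..<k} \<longrightarrow>
       (\<forall>s :: nat \<Rightarrow> 'a.
          card {(i, j). i < m \<and> j < n \<and> (\<forall>l<t. L (idx l) i j = s l)} = m * n div CARD('a) ^ t))"

end

theory Submission
  imports Defs "HOL-Library.FuncSet"
begin

text \<open>Label the rows by the vectors x of (F_q)^M, the columns by the vectors y of (F_q)^N, and
  let the pair (u, v) of S1 \<times> S2 give the rectangle L(x, y) = u \<cdot> x + v \<cdot> y. Superimposing
  t of these rectangles, the cells carrying a given t-tuple of symbols are the solutions
  (x, y) of a linear system whose rows are the concatenations (u_l, v_l); if these rows are
  linearly independent, every right-hand side has exactly q^(M+N-t) solutions. For t \<le> 3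
  they are: in a vanishing combination, 3-independence of S1 forces the coefficients of the
  rows sharing the same u_l to sum to zero, likewise for the v_l, and since the at most three
  pairs (u_l, v_l) are distinct this leaves only the trivial combination. The row and column
  frequencies come from the same count for the single equation in y (resp. x) alone, and
  orthogonality is the case t = 2.\<close>

definition vecs_on :: "'b set \<Rightarrow> ('b \<Rightarrow> 'a::zero) set" where
  "vecs_on I = {z. \<forall>i. i \<notin> I \<longrightarrow> z i = 0}"

definition dot :: "'b set \<Rightarrow> ('b \<Rightarrow> 'a::comm_semiring_0) \<Rightarrow> ('b \<Rightarrow> 'a) \<Rightarrow> 'a" where
  "dot I w z = (\<Sum>i\<in>I. w i * z i)"

lemma card_vecs_on:
  assumes "finite I"
  shows "card (vecs_on I :: ('b \<Rightarrow> 'a::{finite,zero}) set) = CARD('a) ^ card I"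
proof -
  have "bij_betw (\<lambda>z. restrict z I) (vecs_on I :: ('b \<Rightarrow> 'a) set) (PiE I (\<lambda>_. UNIV))"
    by (rule bij_betw_byWitness[where f'="\<lambda>z i. if i \<in> I then z i else 0"])
       (auto simp: vecs_on_def fun_eq_iff PiE_def extensional_def)
  hence "card (vecs_on I :: ('b \<Rightarrow> 'a) set) = card (PiE I (\<lambda>_. (UNIV :: 'a set)))"
    by (rule bij_betw_same_card)
  also have "\<dots> = CARD('a) ^ card I"
    using assms by (simp add: card_PiE)
  finally show ?thesis .
qed

lemma finite_vecs_on:
  "finite I \<Longrightarrow> finite (vecs_on I :: ('b \<Rightarrow> 'a::{finite,zero}) set)"
  using card_vecs_on[of I, where 'a='a] card_ge_0_finite by force

lemma enumeration_vecs_on: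
  assumes "finite I"
  obtains r :: "nat \<Rightarrow> 'b \<Rightarrow> 'a::{finite,zero}"
  where "bij_betw r {0..<CARD('a) ^ card I} (vecs_on I)"
  using ex_bij_betw_nat_finite[OF finite_vecs_on[OF assms]] card_vecs_on[OF assms]
  by metis

lemma dot_add_right: "dot I w (\<lambda>i. z i + d i) = dot I w z + dot I w d"
  by (simp add: dot_def distrib_left sum.distrib)

lemma dot_diff_right:
  "dot I (w :: 'b \<Rightarrow> 'a::comm_ring) (\<lambda>i. z i - d i) = dot I w z - dot I w d"
  by (simp add: dot_def right_diff_distrib sum_subtractf)

lemma dot_add_scaled_left:
  "dot I (\<lambda>j. a j + c * b j) z = dot I a z + c * dot I b z"
  by (simp add: dot_def distrib_right sum.distrib sum_distrib_left mult.assoc)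

lemma dot_unit_right:
  "finite I \<Longrightarrow> i \<in> I \<Longrightarrow> dot I w (\<lambda>j. if j = i then x else 0) = w i * x"
  by (simp add: dot_def if_distrib cong: if_cong)

lemma bij_betw_case_sum_vecs_on:
  "bij_betw (\<lambda>(x, y). case_sum x y) (vecs_on A \<times> vecs_on B) (vecs_on (Inl ` A \<union> Inr ` B))"
  by (rule bij_betw_byWitness[where f'="\<lambda>z. (z \<circ> Inl, z \<circ> Inr)"])
     (force simp: vecs_on_def fun_eq_iff split: sum.split)+

lemma dot_case_sum:
  assumes "finite A" "finite B"
  shows "dot (Inl ` A \<union> Inr ` B) (case_sum u v) (case_sum x y) = dot A u x + dot B v y"
  using assms unfolding dot_def by (subst sum.union_disjoint) (auto simp: sum.reindex)

lemma card_filter_bij_betw: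
  assumes "bij_betw g A B"
  shows "card {a \<in> A. P (g a)} = card {b \<in> B. P b}"
proof -
  have "bij_betw g {a \<in> A. P (g a)} {b \<in> B. P b}"
    using assms unfolding bij_betw_def inj_on_def by auto
  then show ?thesis by (rule bij_betw_same_card)
qed

definition lin_indep_rows :: "'b set \<Rightarrow> nat \<Rightarrow> (nat \<Rightarrow> 'b \<Rightarrow> 'a::field) \<Rightarrow> bool" where
  "lin_indep_rows I t w \<longleftrightarrow>
     (\<forall>c. (\<forall>i\<in>I. (\<Sum>l<t. c l * w l i) = 0) \<longrightarrow> (\<forall>l<t. c l = 0))"

definition solutions ::
    "'b set \<Rightarrow> nat \<Rightarrow> (nat \<Rightarrow> 'b \<Rightarrow> 'a::comm_ring) \<Rightarrow> (nat \<Rightarrow> 'a) \<Rightarrow> ('b \<Rightarrow> 'a) set"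
  where "solutions I t w s = {z \<in> vecs_on I. \<forall>l<t. dot I (w l) z = s l}"

lemma lin_indep_rows_last_nonzero:
  fixes w :: "nat \<Rightarrow> 'b \<Rightarrow> 'a::field"
  assumes "lin_indep_rows I (Suc t) w"
  obtains p where "p \<in> I" "w t p \<noteq> 0"
proof -
  let ?c = "\<lambda>l. if l = t then 1 else 0 :: 'a"
  have "\<exists>i\<in>I. (\<Sum>l<Suc t. ?c l * w l i) \<noteq> 0"
    using assms[unfolded lin_indep_rows_def, rule_format, of ?c t] by auto
  then show ?thesis using that by auto
qed

lemma lin_indep_rows_eliminate:
  assumes indep: "lin_indep_rows I (Suc t) w" and pivot: "w t p \<noteq> 0"
  shows "lin_indep_rows I t (\<lambda>l j. w l j - w l p / w t p * w t j)"
  unfolding lin_indep_rows_def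
proof (rule allI, rule impI)
  fix c assume comb: "\<forall>j\<in>I. (\<Sum>l<t. c l * (w l j - w l p / w t p * w t j)) = 0"
  define c' where "c' l = (if l < t then c l else - (\<Sum>l<t. c l * w l p) / w t p)" for l
  have "(\<Sum>l<Suc t. c' l * w l j) = 0" if "j \<in> I" for j
  proof -
    have "(\<Sum>l<Suc t. c' l * w l j) = (\<Sum>l<t. c l * w l j) - (\<Sum>l<t. c l * w l p) / w t p * w t j"
      by (simp add: c'_def)
    also have "\<dots> = (\<Sum>l<t. c l * (w l j - w l p / w t p * w t j))"
      by (simp add: algebra_simps sum_subtractf sum_distrib_left sum_distrib_right sum_divide_distrib)
    finally show ?thesis using comb that by simp
  qed
  with indep have "\<forall>l<Suc t. c' l = 0" unfolding lin_indep_rows_def by blast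
  then show "\<forall>l<t. c l = 0" by (metis c'_def less_SucI)
qed

text \<open>Gaussian elimination: the pivot coordinate p of the last row is eliminated from the
  other rows, and a solution of the smaller system is corrected at p.\<close>

lemma solutions_nonempty:
  fixes w :: "nat \<Rightarrow> 'b \<Rightarrow> 'a::field"
  assumes "finite I" and "lin_indep_rows I t w"
  shows "solutions I t w s \<noteq> {}"
  using assms(2)
proof (induction t arbitrary: w s)
  case 0
  have "(\<lambda>_. 0) \<in> solutions I 0 w s" by (simp add: solutions_def vecs_on_def)
  then show ?case by blast
next
  case (Suc t)
  obtain p where p: "p \<in> I" "w t p \<noteq> 0"
    using lin_indep_rows_last_nonzero[OF Suc.prems] .
  define r where "r l = w l p / w t p" for l
  define w' where "w' = (\<lambda>l j. w l j - r l * w t j)"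
  have "lin_indep_rows I t w'"
    unfolding w'_def r_def by (rule lin_indep_rows_eliminate[OF Suc.prems p(2)])
  with Suc.IH obtain z' where z': "z' \<in> solutions I t w' (\<lambda>l. s l - r l * s t)"
    by blast
  define shift where "shift = (s t - dot I (w t) z') / w t p"
  define z where "z j = z' j + (if j = p then shift else 0)" for j
  have dot_z: "dot I a z = dot I a z' + a p * shift" for a
    unfolding z_def dot_add_right dot_unit_right[OF assms(1) p(1)] ..
  have last: "dot I (w t) z = s t"
    using p(2) by (simp add: dot_z shift_def)
  have "dot I (w l) z = s l" if "l < t" for l
  proof -
    have "w l = (\<lambda>j. w' l j + r l * w t j)" by (simp add: w'_def)
    then have "dot I (w l) z = dot I (w' l) z + r l * s t"
      by (simp add: dot_add_scaled_left last)
    moreover have "w' l p = 0" using p(2) by (simp add: w'_def r_def)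
    ultimately show ?thesis using z' that by (simp add: dot_z solutions_def)
  qed
  with last have "z \<in> solutions I (Suc t) w s"
    using z' p(1) by (auto simp: solutions_def vecs_on_def z_def less_Suc_eq)
  then show ?case by blast
qed

lemma card_solutions_eq:
  fixes w :: "nat \<Rightarrow> 'b \<Rightarrow> 'a::field"
  assumes "finite I" and "lin_indep_rows I t w"
  shows "card (solutions I t w s) = card (solutions I t w s')"
proof -
  obtain z0 z1 where z0: "z0 \<in> solutions I t w s" and z1: "z1 \<in> solutions I t w s'"
    using solutions_nonempty[OF assms] by blast
  define d where "d j = z1 j - z0 j" for j
  have "bij_betw (\<lambda>z j. z j + d j) (solutions I t w s) (solutions I t w s')"
    by (rule bij_betw_byWitness[where f'="\<lambda>z j. z j - d j"])
       (use z0 z1 in \<open>auto simp: solutions_def vecs_on_def d_def dot_add_right dot_diff_right\<close>)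
  then show ?thesis by (rule bij_betw_same_card)
qed

lemma card_solutions:
  fixes w :: "nat \<Rightarrow> 'b \<Rightarrow> 'a::{finite,field}"
  assumes "finite I" and "lin_indep_rows I t w"
  shows "card (solutions I t w s) * CARD('a) ^ t = CARD('a) ^ card I"
proof -
  define rows_at where "rows_at z = (\<lambda>l. if l < t then dot I (w l) z else 0)" for z
  have fibre: "{z \<in> vecs_on I. rows_at z = s'} = solutions I t w s'"
    if "s' \<in> vecs_on {..<t}" for s'
    using that by (auto simp: solutions_def rows_at_def vecs_on_def fun_eq_iff)
  have "CARD('a) ^ card I = card (vecs_on I :: ('b \<Rightarrow> 'a) set)"
    using card_vecs_on[OF assms(1), where 'a='a] by simp
  also have "\<dots> = (\<Sum>s'\<in>vecs_on {..<t}. card {z \<in> vecs_on I. rows_at z = s'})"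
  proof -
    have "rows_at ` vecs_on I \<subseteq> vecs_on {..<t}"
      by (auto simp: rows_at_def vecs_on_def)
    from sum.group[OF finite_vecs_on[OF assms(1)] finite_vecs_on this, of "\<lambda>_. 1 :: nat"]
    show ?thesis by simp
  qed
  also have "\<dots> = (\<Sum>s'::nat \<Rightarrow> 'a\<in>vecs_on {..<t}. card (solutions I t w s))"
    by (rule sum.cong[OF refl]) (metis fibre card_solutions_eq[OF assms])
  also have "\<dots> = card (solutions I t w s) * CARD('a) ^ t"
    by (simp add: card_vecs_on)
  finally show ?thesis ..
qed

lemma lin_indep_vecs_if_t_independent:
  "t_independent t M S \<Longrightarrow> T \<subseteq> S \<Longrightarrow> card T \<le> t \<Longrightarrow> lin_indep_vecs M T"
  unfolding t_independent_def by blast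

lemma lin_indep_vecs_class_sum:
  fixes u :: "'j \<Rightarrow> nat \<Rightarrow> 'a::field"
  assumes "finite J" and "lin_indep_vecs M (u ` J)"
    and "\<forall>a<M. (\<Sum>k\<in>J. c k * u k a) = 0" and "j \<in> J"
  shows "(\<Sum>k\<in>{k \<in> J. u k = u j}. c k) = 0"
proof -
  define C where "C x = (\<Sum>k\<in>{k \<in> J. u k = x}. c k)" for x
  have "(\<Sum>x\<in>u ` J. C x * x a) = 0" if "a < M" for a
  proof -
    have "(\<Sum>x\<in>u ` J. C x * x a) = (\<Sum>x\<in>u ` J. \<Sum>k\<in>{k \<in> J. u k = x}. c k * u k a)"
      unfolding C_def sum_distrib_right by (rule sum.cong) auto
    also have "\<dots> = (\<Sum>k\<in>J. c k * u k a)"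
      using assms(1) by (rule sum.image_gen[symmetric])
    finally show ?thesis using assms(3) that by simp
  qed
  with assms(2) have "\<forall>x\<in>u ` J. C x = 0" unfolding lin_indep_vecs_def by blast
  then show ?thesis using assms(4) by (simp add: C_def)
qed

lemma lin_indep_rows_if_lin_indep_vecs:
  assumes "lin_indep_vecs M (w ` {..<t})" and "inj_on w {..<t}"
  shows "lin_indep_rows {..<M} t w"
  unfolding lin_indep_rows_def
proof (intro allI impI)
  fix c l assume "\<forall>i\<in>{..<M}. (\<Sum>l<t. c l * w l i) = 0" and "l < t"
  then have "(\<Sum>k\<in>{k \<in> {..<t}. w k = w l}. c k) = 0"
    by (intro lin_indep_vecs_class_sum[OF _ assms(1)]) auto
  moreover have "{k \<in> {..<t}. w k = w l} = {l}"
    using assms(2) \<open>l < t\<close> by (auto dest: inj_onD)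
  ultimately show "c l = 0" by simp
qed

text \<open>This fails for four cells: put 1, -1, 1, -1 around the corners of a rectangle.\<close>

lemma zero_if_line_sums_zero_three_cells:
  fixes c :: "'j \<Rightarrow> 'a::ab_group_add"
  assumes "finite J" and "card J \<le> 3" and inj: "inj_on (\<lambda>k. (f k, g k)) J"
    and rows: "\<forall>j\<in>J. (\<Sum>k\<in>{k \<in> J. f k = f j}. c k) = 0"
    and cols: "\<forall>j\<in>J. (\<Sum>k\<in>{k \<in> J. g k = g j}. c k) = 0"
    and "j \<in> J"
  shows "c j = 0"
proof -
  define R where "R = {k \<in> J. f k = f j}"
  define C where "C = {k \<in> J. g k = g j}"
  have sum_R: "(\<Sum>k\<in>R. c k) = 0" and sum_C: "(\<Sum>k\<in>C. c k) = 0"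
    using rows cols \<open>j \<in> J\<close> by (simp_all add: R_def C_def)
  have same_cell: "k = k'" if "k \<in> J" "k' \<in> J" "f k = f k'" "g k = g k'" for k k'
    using inj that by (auto dest: inj_onD)
  consider "R = {j}" | "C = {j}" | a b where "a \<in> R" "a \<noteq> j" "b \<in> C" "b \<noteq> j"
    using \<open>j \<in> J\<close> by (auto simp: R_def C_def)
  then show ?thesis
  proof cases
    case 1
    then show ?thesis using sum_R by simp
  next
    case 2
    then show ?thesis using sum_C by simp
  next
    case 3
    then have "a \<in> J" "b \<in> J" "f a = f j" "g b = g j"
      by (auto simp: R_def C_def)
    have "a \<noteq> b"
      using 3 same_cell[of a j] \<open>a \<in> J\<close> \<open>j \<in> J\<close> by (auto simp: R_def C_def)
    have J: "J = {j, a, b}"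
    proof -
      have sub: "{j, a, b} \<subseteq> J" and "card {j, a, b} = 3"
        using 3 \<open>a \<noteq> b\<close> \<open>a \<in> J\<close> \<open>b \<in> J\<close> \<open>j \<in> J\<close> by auto
      then have "card {j, a, b} = card J"
        using card_mono[OF assms(1) sub] assms(2) by linarith
      then show ?thesis using card_subset_eq[OF assms(1) sub] by simp
    qed
    have "R = {j, a}"
      using J 3 same_cell[of b j] \<open>b \<in> J\<close> \<open>j \<in> J\<close> \<open>f a = f j\<close> \<open>g b = g j\<close>
      by (auto simp: R_def)
    moreover have "{k \<in> J. g k = g a} = {a}"
      using J 3 same_cell[of a j] \<open>a \<in> J\<close> \<open>j \<in> J\<close> \<open>f a = f j\<close> \<open>g b = g j\<close>
      by auto
    ultimately have "c j + c a = 0" and "c a = 0"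
      using sum_R cols \<open>a \<in> J\<close> 3 by auto
    then show ?thesis by simp
  qed
qed

lemma lin_indep_rows_case_sum:
  fixes u v :: "nat \<Rightarrow> nat \<Rightarrow> 'a::field"
  assumes "t \<le> 3" and "inj_on (\<lambda>l. (u l, v l)) {..<t}"
    and "lin_indep_vecs M (u ` {..<t})" and "lin_indep_vecs N (v ` {..<t})"
  shows "lin_indep_rows (Inl ` {..<M} \<union> Inr ` {..<N}) t (\<lambda>l. case_sum (u l) (v l))"
  unfolding lin_indep_rows_def
proof (intro allI impI)
  fix c l
  assume comb: "\<forall>i\<in>Inl ` {..<M} \<union> Inr ` {..<N}. (\<Sum>l<t. c l * case_sum (u l) (v l) i) = 0"
    and "l < t"
  have "(\<Sum>l<t. c l * u l a) = 0" if "a < M" for a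
    using comb[rule_format, of "Inl a"] that by simp
  moreover have "(\<Sum>l<t. c l * v l b) = 0" if "b < N" for b
    using comb[rule_format, of "Inr b"] that by simp
  ultimately have "\<forall>k\<in>{..<t}. (\<Sum>k'\<in>{k' \<in> {..<t}. u k' = u k}. c k') = 0"
    and "\<forall>k\<in>{..<t}. (\<Sum>k'\<in>{k' \<in> {..<t}. v k' = v k}. c k') = 0"
    using lin_indep_vecs_class_sum[OF _ assms(3)] lin_indep_vecs_class_sum[OF _ assms(4)] by auto
  then show "c l = 0"
    using zero_if_line_sums_zero_three_cells[OF _ _ assms(2)] assms(1) \<open>l < t\<close> by simp
qed

lemma orthogonal_fr_if_t_orthogonal_2:
  fixes L :: "nat \<Rightarrow> nat \<Rightarrow> nat \<Rightarrow> 'a::finite"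
  assumes "t_orthogonal 2 k m n L" and "a < k" and "b < k" and "a \<noteq> b"
  shows "orthogonal_fr m n (L a) (L b)"
  unfolding orthogonal_fr_def
proof (intro allI)
  fix s1 s2 :: 'a
  define idx where "idx l = (if l = 0 then a else b)" for l :: nat
  define s where "s l = (if l = 0 then s1 else s2)" for l :: nat
  have "inj_on idx {0..<2}" and "idx ` {0..<2} \<subseteq> {0..<k}"
    using assms(2-4) by (auto simp: inj_on_def idx_def)
  from assms(1)[unfolded t_orthogonal_def, rule_format, OF this, of s]
  have "card {(i, j). i < m \<and> j < n \<and> (\<forall>l<2. L (idx l) i j = s l)} = m * n div CARD('a) ^ 2" .
  moreover have "(\<forall>l<2. L (idx l) i j = s l) \<longleftrightarrow> L a i j = s1 \<and> L b i j = s2" for i j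
    by (auto simp: less_2_cases_iff idx_def s_def)
  ultimately show "card {(i, j). i < m \<and> j < n \<and> L a i j = s1 \<and> L b i j = s2}
      = m * n div CARD('a) ^ 2"
    by simp
qed

lemma MOFR_if_t_orthogonal_2:
  "(\<forall>a<k. freq_rect m n (L a)) \<Longrightarrow> t_orthogonal 2 k m n L \<Longrightarrow> MOFR k m n L"
  by (simp add: MOFR_def orthogonal_fr_if_t_orthogonal_2)

locale labelled_grid =
  fixes M N :: nat and rx ry :: "nat \<Rightarrow> nat \<Rightarrow> 'a::{finite,field}"
  assumes rx: "bij_betw rx {0..<CARD('a) ^ M} (vecs_on {..<M})"
    and ry: "bij_betw ry {0..<CARD('a) ^ N} (vecs_on {..<N})"
begin

definition linear_rect :: "(nat \<Rightarrow> 'a) \<Rightarrow> (nat \<Rightarrow> 'a) \<Rightarrow> nat \<Rightarrow> nat \<Rightarrow> 'a" where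
  "linear_rect u v i j = dot {..<M} u (rx i) + dot {..<N} v (ry j)"

lemma card_cells_linear_rect:
  assumes "lin_indep_rows (Inl ` {..<M} \<union> Inr ` {..<N}) t (\<lambda>l. case_sum (u l) (v l))"
  shows "card {(i, j). i < CARD('a) ^ M \<and> j < CARD('a) ^ N \<and>
                 (\<forall>l<t. linear_rect (u l) (v l) i j = s l)} * CARD('a) ^ t
         = CARD('a) ^ (M + N)"
proof -
  let ?I = "Inl ` {..<M} \<union> Inr ` {..<N} :: (nat + nat) set"
  let ?g = "(\<lambda>(x, y). case_sum x y) \<circ> map_prod rx ry"
  have bij: "bij_betw ?g ({0..<CARD('a) ^ M} \<times> {0..<CARD('a) ^ N}) (vecs_on ?I)"
    by (rule bij_betw_trans[OF bij_betw_map_prod[OF rx ry] bij_betw_case_sum_vecs_on])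
  have "{(i, j). i < CARD('a) ^ M \<and> j < CARD('a) ^ N \<and> (\<forall>l<t. linear_rect (u l) (v l) i j = s l)}
      = {p \<in> {0..<CARD('a) ^ M} \<times> {0..<CARD('a) ^ N}.
           (\<lambda>z. \<forall>l<t. dot ?I (case_sum (u l) (v l)) z = s l) (?g p)}"
    by (auto simp: linear_rect_def dot_case_sum)
  also have "card \<dots> = card (solutions ?I t (\<lambda>l. case_sum (u l) (v l)) s)"
    using card_filter_bij_betw[OF bij, of "\<lambda>z. \<forall>l<t. dot ?I (case_sum (u l) (v l)) z = s l"]
    by (simp add: solutions_def)
  moreover have "card ?I = M + N"
    by (subst card_Un_disjoint) (auto simp: card_image)
  ultimately show ?thesis
    using card_solutions[OF _ assms, of s] by simp
qed

lemma card_row_linear_rect: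
  assumes "lin_indep_rows {..<N} 1 (\<lambda>_. v)"
  shows "card {j. j < CARD('a) ^ N \<and> linear_rect u v i j = s} * CARD('a) = CARD('a) ^ N"
proof -
  let ?s = "\<lambda>_. s - dot {..<M} u (rx i)"
  have "{j. j < CARD('a) ^ N \<and> linear_rect u v i j = s}
      = {j \<in> {0..<CARD('a) ^ N}. (\<lambda>y. dot {..<N} v y = s - dot {..<M} u (rx i)) (ry j)}"
    by (auto simp: linear_rect_def eq_diff_eq add.commute)
  also have "card \<dots> = card (solutions {..<N} 1 (\<lambda>_. v) ?s)"
    using card_filter_bij_betw[OF ry, of "\<lambda>y. dot {..<N} v y = s - dot {..<M} u (rx i)"]
    by (simp add: solutions_def)
  finally show ?thesis
    using card_solutions[OF _ assms, of ?s] by simp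
qed

lemma card_col_linear_rect:
  assumes "lin_indep_rows {..<M} 1 (\<lambda>_. u)"
  shows "card {i. i < CARD('a) ^ M \<and> linear_rect u v i j = s} * CARD('a) = CARD('a) ^ M"
proof -
  let ?s = "\<lambda>_. s - dot {..<N} v (ry j)"
  have "{i. i < CARD('a) ^ M \<and> linear_rect u v i j = s}
      = {i \<in> {0..<CARD('a) ^ M}. (\<lambda>x. dot {..<M} u x = s - dot {..<N} v (ry j)) (rx i)}"
    by (auto simp: linear_rect_def eq_diff_eq)
  also have "card \<dots> = card (solutions {..<M} 1 (\<lambda>_. u) ?s)"
    using card_filter_bij_betw[OF rx, of "\<lambda>x. dot {..<M} u x = s - dot {..<N} v (ry j)"]
    by (simp add: solutions_def)
  finally show ?thesis
    using card_solutions[OF _ assms, of ?s] by simp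
qed

lemma freq_rect_linear_rect:
  assumes "M > 0" and "N > 0" and "lin_indep_vecs M {u}" and "lin_indep_vecs N {v}"
  shows "freq_rect (CARD('a) ^ M) (CARD('a) ^ N) (linear_rect u v)"
proof -
  have "(\<lambda>_. u) ` {..<1::nat} = {u}" and "(\<lambda>_. v) ` {..<1::nat} = {v}"
    by auto
  then have "lin_indep_rows {..<M} 1 (\<lambda>_. u)" and "lin_indep_rows {..<N} 1 (\<lambda>_. v)"
    using assms(3,4) by (auto intro!: lin_indep_rows_if_lin_indep_vecs simp: inj_on_def)
  note counts = card_row_linear_rect[OF this(2)] card_col_linear_rect[OF this(1)]
  have "card {j. j < CARD('a) ^ N \<and> linear_rect u v i j = s} = CARD('a) ^ N div CARD('a)"
    and "card {i. i < CARD('a) ^ M \<and> linear_rect u v i j = s} = CARD('a) ^ M div CARD('a)"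
    for i j s
    using counts(1)[of u i s] counts(2)[of v j s]
    by (metis div_mult_self_is_m zero_less_card_finite)+
  with assms(1,2) show ?thesis
    unfolding freq_rect_def by (simp add: dvd_power)
qed

lemma t_orthogonal_linear_rect:
  fixes P :: "nat \<Rightarrow> (nat \<Rightarrow> 'a) \<times> (nat \<Rightarrow> 'a)"
  assumes "t \<le> 3" and P: "inj_on P {0..<k}" "P ` {0..<k} \<subseteq> S1 \<times> S2"
    and S1: "t_independent 3 M S1" and S2: "t_independent 3 N S2"
  shows "t_orthogonal t k (CARD('a) ^ M) (CARD('a) ^ N) (\<lambda>a. linear_rect (fst (P a)) (snd (P a)))"
  unfolding t_orthogonal_def
proof (intro allI impI)
  fix idx and s :: "nat \<Rightarrow> 'a"
  assume idx: "inj_on idx {0..<t}" "idx ` {0..<t} \<subseteq> {0..<k}"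
  define u where "u l = fst (P (idx l))" for l
  define v where "v l = snd (P (idx l))" for l
  have "inj_on (P \<circ> idx) {..<t}"
    using comp_inj_on[OF idx(1) inj_on_subset[OF P(1) idx(2)]] by (simp add: atLeast0LessThan)
  then have inj: "inj_on (\<lambda>l. (u l, v l)) {..<t}"
    by (simp add: u_def v_def comp_def)
  have uv_in: "u l \<in> S1" "v l \<in> S2" if "l < t" for l
    using P(2) idx(2) that by (auto simp: image_subset_iff u_def v_def mem_Times_iff)
  have "lin_indep_vecs M (u ` {..<t})"
    by (rule lin_indep_vecs_if_t_independent[OF S1])
       (use uv_in card_image_le[of "{..<t}" u] assms(1) in auto)
  moreover have "lin_indep_vecs N (v ` {..<t})"
    by (rule lin_indep_vecs_if_t_independent[OF S2])
       (use uv_in card_image_le[of "{..<t}" v] assms(1) in auto)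
  ultimately have "lin_indep_rows (Inl ` {..<M} \<union> Inr ` {..<N}) t (\<lambda>l. case_sum (u l) (v l))"
    by (rule lin_indep_rows_case_sum[OF assms(1) inj])
  from card_cells_linear_rect[OF this, of s]
  have cells: "card {(i, j). i < CARD('a) ^ M \<and> j < CARD('a) ^ N \<and>
          (\<forall>l<t. linear_rect (fst (P (idx l))) (snd (P (idx l))) i j = s l)} * CARD('a) ^ t
        = CARD('a) ^ M * CARD('a) ^ N"
    by (simp add: u_def v_def power_add)
  show "card {(i, j). i < CARD('a) ^ M \<and> j < CARD('a) ^ N \<and>
          (\<forall>l<t. linear_rect (fst (P (idx l))) (snd (P (idx l))) i j = s l)}
        = CARD('a) ^ M * CARD('a) ^ N div CARD('a) ^ t"
    by (simp flip: cells)
qed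

end

theorem mainTheorem9:
  fixes M N k1 k2 :: nat
    and S1 S2 :: "(nat \<Rightarrow> 'a::{finite, field}) set"
  assumes "M > 0" and "N > 0"
    and "finite S1" and "card S1 = k1" and "t_independent 3 M S1"
    and "finite S2" and "card S2 = k2" and "t_independent 3 N S2"
  shows "\<exists>L :: nat \<Rightarrow> nat \<Rightarrow> nat \<Rightarrow> 'a.
           MOFR (k1 * k2) (CARD('a) ^ M) (CARD('a) ^ N) L \<and>
           t_orthogonal 3 (k1 * k2) (CARD('a) ^ M) (CARD('a) ^ N) L"
proof -
  obtain rx ry :: "nat \<Rightarrow> nat \<Rightarrow> 'a"
    where "bij_betw rx {0..<CARD('a) ^ M} (vecs_on {..<M})"
      and "bij_betw ry {0..<CARD('a) ^ N} (vecs_on {..<N})"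
    using enumeration_vecs_on[of "{..<M}"] enumeration_vecs_on[of "{..<N}"]
    by (metis card_lessThan finite_lessThan)
  then interpret labelled_grid M N rx ry
    by unfold_locales
  obtain P where P: "bij_betw P {0..<k1 * k2} (S1 \<times> S2)"
    using ex_bij_betw_nat_finite[of "S1 \<times> S2"] assms(3,4,6,7)
    by (metis card_cartesian_product finite_cartesian_product)
  define L where "L a = linear_rect (fst (P a)) (snd (P a))" for a
  have freq: "freq_rect (CARD('a) ^ M) (CARD('a) ^ N) (L a)" if "a < k1 * k2" for a
  proof -
    have "{fst (P a)} \<subseteq> S1" and "{snd (P a)} \<subseteq> S2"
      using bij_betwE[OF P] that by (auto simp: mem_Times_iff)
    then show ?thesis
      unfolding L_def using assms(1,2) lin_indep_vecs_if_t_independent[OF assms(5)]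
        lin_indep_vecs_if_t_independent[OF assms(8)]
      by (simp add: freq_rect_linear_rect)
  qed
  have orth: "t_orthogonal t (k1 * k2) (CARD('a) ^ M) (CARD('a) ^ N) L" if "t \<le> 3" for t
    unfolding L_def
    using t_orthogonal_linear_rect[OF that bij_betw_imp_inj_on[OF P] _ assms(5,8)]
      bij_betw_imp_surj_on[OF P]
    by simp
  have "MOFR (k1 * k2) (CARD('a) ^ M) (CARD('a) ^ N) L"
    using freq orth[of 2] by (simp add: MOFR_if_t_orthogonal_2)
  with orth[of 3] show ?thesis
    by auto
qed

end
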